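(* Consider the Generalized Stochastic Blockmodel with $p>q$ in which all true clusters have size exactly $K$, every in-cluster pair has edge probability exactly $p$ and every other pair (different clusters or involving an outlier) has edge probability exactly $q$, and where $K=\Theta(n)$ and $n_2=\Theta(n_1)$. Then there is an absolute constant $c_2>0$ such that for all sufficiently large $n$: if some algorithm (a measurable function of the adjacency matrix $A$) recovers the true clusters correctly with probability at least $\tfrac34$ (for every possible true clustering), then $$\frac{p-q}{\sqrt{p(1-q)}}\ \ge\ \frac{c_2}{\sqrt{n}}.$$
   Context: Generalized Stochastic Blockmodel: there are $n=n_1+n_2$ nodes, split into a set $V_1$ of $n_1$ nodes and a set $V_2$ of $n_2$ outlier nodes; $V_1$ is partitioned into $r$ disjoint true clusters. Edges between distinct pairs are drawn independently, with probability $p$ for pairs in the same true cluster and probability $q$ for pairs in different clusters or with at least one node in $V_2$. $A$ is the symmetric $0/1$ adjacency matrix. The recovery task is to output the true clusters given $A$. *)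

theory Defs
  imports Complex_Main
begin

text \<open>The random graph is represented by its edge set, a subset of
  the unordered pairs, encoded as (i,j) with i < j < n; this is equivalent to the
  symmetric 0/1 adjacency matrix A with zero diagonal.\<close>

definition node_pairs :: "nat \<Rightarrow> (nat \<times> nat) set" where
  "node_pairs n = {(i, j). i < j \<and> j < n}"

text \<open>A true clustering: r pairwise disjoint clusters, each of size exactly K, inside
  the node set; V1 is their union, V2 (the outliers) are the remaining nodes.\<close>

definition valid_clustering :: "nat \<Rightarrow> nat \<Rightarrow> nat \<Rightarrow> nat set set \<Rightarrow> bool" where
  "valid_clustering n r K C \<longleftrightarrow>
     (\<forall>S\<in>C. S \<subseteq> {..<n} \<and> card S = K) \<and> pairwise disjnt C \<and> finite C \<and> card C = r"

definition same_cluster :: "nat set set \<Rightarrow> nat \<Rightarrow> nat \<Rightarrow> bool" where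
  "same_cluster C i j \<longleftrightarrow> (\<exists>S\<in>C. i \<in> S \<and> j \<in> S)"

definition edge_prob :: "real \<Rightarrow> real \<Rightarrow> nat set set \<Rightarrow> nat \<times> nat \<Rightarrow> real" where
  "edge_prob p q C e = (if same_cluster C (fst e) (snd e) then p else q)"

definition graph_prob :: "nat \<Rightarrow> real \<Rightarrow> real \<Rightarrow> nat set set \<Rightarrow> (nat \<times> nat) set \<Rightarrow> real" where
  "graph_prob n p q C E =
     (\<Prod>e\<in>node_pairs n. if e \<in> E then edge_prob p q C e else 1 - edge_prob p q C e)"

definition success_prob ::
  "nat \<Rightarrow> real \<Rightarrow> real \<Rightarrow> nat set set \<Rightarrow> ((nat \<times> nat) set \<Rightarrow> nat set set) \<Rightarrow> real" where
  "success_prob n p q C f =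
     (\<Sum>E\<in>{E. E \<subseteq> node_pairs n \<and> f E = C}. graph_prob n p q C E)"

end

(*
  Le Cam's two-point method. Let C split the first r K nodes into consecutive blocks and let C'
  be C with node 0 swapped for the outlier r K. An algorithm that recovers both clusterings with
  probability 3/4 has disjoint success events of mass at least 3/4 under the two graph laws,
  which forces their Bhattacharyya coefficient below 13/15. The edges being independent, that
  coefficient is B(p,q)^m, where B(p,q) is the coefficient of two Bernoulli laws and m <= 4n
  counts the pairs whose edge probability changes. Since 1 - B(p,q) <= (p-q)^2/(p(1-q)),
  Bernoulli's inequality gives (p-q)^2/(p(1-q)) >= 1/(36n), so c2 = 1/6 works for every n >= 1.
*)

theory Submission
  imports Defs "HOL-Combinatorics.Transposition"
begin

lemma sum_Pow_prod_if:
  fixes a b :: "'a \<Rightarrow> 'b :: comm_semiring_1"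
  assumes "finite S"
  shows "(\<Sum>E\<in>Pow S. \<Prod>e\<in>S. if e \<in> E then a e else b e) = (\<Prod>e\<in>S. a e + b e)"
proof -
  have "(\<Prod>e\<in>S. if e \<in> E then a e else b e) = (\<Prod>e\<in>E. a e) * (\<Prod>e\<in>S - E. b e)"
    if "E \<subseteq> S" for E
    using prod.If_cases[OF assms, of "\<lambda>e. e \<in> E" a b] that
    by (simp add: Int_absorb1 Diff_eq[symmetric])
  then show ?thesis
    by (simp add: prod_add[OF assms])
qed

lemma real_sqrt_prod: "finite S \<Longrightarrow> sqrt (\<Prod>e\<in>S. f e) = (\<Prod>e\<in>S. sqrt (f e))"
  by (induction S rule: finite_induct) (auto simp: real_sqrt_mult)

lemma prod_if_eq_power: "finite S \<Longrightarrow> (\<Prod>e\<in>S. if P e then a else 1) = a ^ card {e \<in> S. P e}"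
  by (simp add: prod.If_cases Int_def)

definition bhattacharyya :: "'a set \<Rightarrow> ('a \<Rightarrow> real) \<Rightarrow> ('a \<Rightarrow> real) \<Rightarrow> real" where
  "bhattacharyya \<Omega> P Q = (\<Sum>w\<in>\<Omega>. sqrt (P w) * sqrt (Q w))"

lemma sum_disjoint_events_le:
  fixes P Q :: "'a \<Rightarrow> real"
  assumes "finite \<Omega>" and "\<forall>w\<in>\<Omega>. P w \<ge> 0"
    and "sum P \<Omega> = 1" and "sum Q \<Omega> = 1"
    and "A \<subseteq> \<Omega>" "B \<subseteq> \<Omega>" "A \<inter> B = {}"
  shows "sum P A + sum Q B \<le> 1 + (\<Sum>w\<in>\<Omega>. \<bar>P w - Q w\<bar>) / 2"
proof -
  define M where "M w = max (P w) (Q w)" for w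
  have "sum P A + sum Q B \<le> sum M A + sum M B"
    by (intro add_mono sum_mono) (simp_all add: M_def)
  also have "\<dots> = sum M (A \<union> B)"
    using assms by (simp add: sum.union_disjoint finite_subset)
  also have "\<dots> \<le> sum M \<Omega>"
    using assms by (intro sum_mono2) (auto simp: M_def le_max_iff_disj)
  also have "\<dots> = (\<Sum>w\<in>\<Omega>. (P w + Q w) / 2 + \<bar>P w - Q w\<bar> / 2)"
    unfolding M_def by (intro sum.cong refl) (simp add: max_def abs_if field_simps)
  also have "\<dots> = 1 + (\<Sum>w\<in>\<Omega>. \<bar>P w - Q w\<bar>) / 2"
    using assms by (simp add: sum.distrib sum_divide_distrib[symmetric])
  finally show ?thesis .
qed

(* The right-hand side is 2 (u - v)^2 + (u + v)^2 / 8, the AM-GM bound for |u - v| (u + v). *)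
lemma abs_diff_squares_le:
  fixes u v :: real
  shows "\<bar>u\<^sup>2 - v\<^sup>2\<bar> \<le> 17/8 * (u\<^sup>2 + v\<^sup>2) - 15/4 * (u * v)"
proof -
  have "17/8 * (u\<^sup>2 + v\<^sup>2) - 15/4 * (u * v) - (u\<^sup>2 - v\<^sup>2) = (3*u - 5*v)\<^sup>2 / 8"
    and "17/8 * (u\<^sup>2 + v\<^sup>2) - 15/4 * (u * v) + (u\<^sup>2 - v\<^sup>2) = (5*u - 3*v)\<^sup>2 / 8"
    by (simp_all add: power2_eq_square algebra_simps)
  moreover have "(3*u - 5*v)\<^sup>2 / 8 \<ge> 0" "(5*u - 3*v)\<^sup>2 / 8 \<ge> 0"
    by simp_all
  ultimately show ?thesis
    by (simp only: abs_le_iff) linarith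
qed

lemma sum_abs_diff_le_bhattacharyya:
  fixes P Q :: "'a \<Rightarrow> real"
  assumes "\<forall>w\<in>\<Omega>. P w \<ge> 0" "\<forall>w\<in>\<Omega>. Q w \<ge> 0" "sum P \<Omega> = 1" "sum Q \<Omega> = 1"
  shows "(\<Sum>w\<in>\<Omega>. \<bar>P w - Q w\<bar>) \<le> 17/4 - 15/4 * bhattacharyya \<Omega> P Q"
proof -
  have "(\<Sum>w\<in>\<Omega>. \<bar>P w - Q w\<bar>)
      \<le> (\<Sum>w\<in>\<Omega>. 17/8 * (P w + Q w) - 15/4 * (sqrt (P w) * sqrt (Q w)))"
  proof (rule sum_mono)
    fix w assume "w \<in> \<Omega>"
    then show "\<bar>P w - Q w\<bar> \<le> 17/8 * (P w + Q w) - 15/4 * (sqrt (P w) * sqrt (Q w))"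
      using abs_diff_squares_le[of "sqrt (P w)" "sqrt (Q w)"] assms by simp
  qed
  also have "\<dots> = 17/4 - 15/4 * bhattacharyya \<Omega> P Q"
    using assms by (simp add: bhattacharyya_def sum_subtractf sum.distrib sum_distrib_left[symmetric]
        sum_divide_distrib[symmetric])
  finally show ?thesis .
qed

lemma bhattacharyya_le_of_disjoint_events:
  fixes P Q :: "'a \<Rightarrow> real"
  assumes "finite \<Omega>" "\<forall>w\<in>\<Omega>. P w \<ge> 0" "\<forall>w\<in>\<Omega>. Q w \<ge> 0"
    and "sum P \<Omega> = 1" "sum Q \<Omega> = 1"
    and "A \<subseteq> \<Omega>" "B \<subseteq> \<Omega>" "A \<inter> B = {}"
    and "sum P A \<ge> 3/4" "sum Q B \<ge> 3/4"
  shows "bhattacharyya \<Omega> P Q \<le> 13/15"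
  using sum_disjoint_events_le[of \<Omega> P Q A B] sum_abs_diff_le_bhattacharyya[of \<Omega> P Q] assms
  by linarith

definition bernoulli_bhattacharyya :: "real \<Rightarrow> real \<Rightarrow> real" where
  "bernoulli_bhattacharyya x y = sqrt x * sqrt y + sqrt (1 - x) * sqrt (1 - y)"

lemma one_minus_bernoulli_bhattacharyya_le:
  assumes "0 \<le> q" "q < p" "p \<le> 1"
  shows "1 - bernoulli_bhattacharyya p q \<le> (p - q)\<^sup>2 / (p * (1 - q))"
proof -
  have p: "p > 0" and q: "1 - q > 0"
    using assms by auto
  define s t u w where "s = sqrt p" "t = sqrt q" "u = sqrt (1 - p)" "w = sqrt (1 - q)"
  have sq: "s\<^sup>2 = p" "t\<^sup>2 = q" "u\<^sup>2 = 1 - p" "w\<^sup>2 = 1 - q"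
    and nonneg: "s \<ge> 0" "t \<ge> 0" "u \<ge> 0" "w \<ge> 0"
    using assms by (simp_all add: s_t_u_w_def)
  have "(s - t)\<^sup>2 * s\<^sup>2 \<le> (s - t)\<^sup>2 * (s + t)\<^sup>2"
    using nonneg by (intro mult_left_mono power_mono) auto
  also have "\<dots> = (p - q)\<^sup>2"
    using sq by (simp add: power2_eq_square algebra_simps)
  finally have st: "(s - t)\<^sup>2 \<le> (p - q)\<^sup>2 / p"
    using p sq by (simp add: field_simps)
  have "(w - u)\<^sup>2 * w\<^sup>2 \<le> (w - u)\<^sup>2 * (w + u)\<^sup>2"
    using nonneg by (intro mult_left_mono power_mono) auto
  also have "\<dots> = (w\<^sup>2 - u\<^sup>2)\<^sup>2"
    by (simp add: power2_eq_square algebra_simps)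
  also have "\<dots> = (p - q)\<^sup>2"
    using sq by simp
  finally have wu: "(w - u)\<^sup>2 \<le> (p - q)\<^sup>2 / (1 - q)"
    using q sq by (simp add: field_simps)
  have "1 - bernoulli_bhattacharyya p q = ((s - t)\<^sup>2 + (w - u)\<^sup>2) / 2"
    using sq by (simp add: bernoulli_bhattacharyya_def s_t_u_w_def[symmetric] power2_eq_square algebra_simps)
  also have "\<dots> \<le> ((p - q)\<^sup>2 / p + (p - q)\<^sup>2 / (1 - q)) / 2"
    using st wu by (intro divide_right_mono add_mono) simp_all
  also have "\<dots> = (p - q)\<^sup>2 * (1 - q + p) / (2 * (p * (1 - q)))"
    using p q by (simp add: field_simps)
  also have "\<dots> \<le> (p - q)\<^sup>2 * 2 / (2 * (p * (1 - q)))"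
    using assms p q by (intro divide_right_mono mult_left_mono) auto
  finally show ?thesis
    by simp
qed

lemma bhattacharyya_Pow_product:
  fixes x y :: "'a \<Rightarrow> real"
  assumes "finite S"
  shows "bhattacharyya (Pow S)
           (\<lambda>E. \<Prod>e\<in>S. if e \<in> E then x e else 1 - x e)
           (\<lambda>E. \<Prod>e\<in>S. if e \<in> E then y e else 1 - y e)
       = (\<Prod>e\<in>S. bernoulli_bhattacharyya (x e) (y e))"
proof -
  have "sqrt (\<Prod>e\<in>S. if e \<in> E then x e else 1 - x e) * sqrt (\<Prod>e\<in>S. if e \<in> E then y e else 1 - y e)
      = (\<Prod>e\<in>S. if e \<in> E then sqrt (x e) * sqrt (y e) else sqrt (1 - x e) * sqrt (1 - y e))" for E
    by (simp add: real_sqrt_prod[OF assms] prod.distrib[symmetric] if_distrib if_distribR cong: if_cong)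
  then show ?thesis
    by (simp add: bhattacharyya_def bernoulli_bhattacharyya_def sum_Pow_prod_if[OF assms])
qed

lemma finite_node_pairs: "finite (node_pairs n)"
  by (rule finite_subset[of _ "{..<n} \<times> {..<n}"]) (auto simp: node_pairs_def)

lemma edge_prob_cases: "edge_prob p q C e = p \<or> edge_prob p q C e = q"
  by (simp add: edge_prob_def)

lemma graph_prob_nonneg:
  assumes "0 \<le> q" "q \<le> 1" "0 \<le> p" "p \<le> 1"
  shows "graph_prob n p q C E \<ge> 0"
  unfolding graph_prob_def using assms edge_prob_cases[of p q C]
  by (intro prod_nonneg) (metis diff_ge_0_iff_ge)

lemma sum_graph_prob: "(\<Sum>E\<in>Pow (node_pairs n). graph_prob n p q C E) = 1"
  unfolding graph_prob_def by (simp add: sum_Pow_prod_if[OF finite_node_pairs])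

lemma bhattacharyya_graph_prob:
  assumes "0 \<le> q" "q \<le> 1" "0 \<le> p" "p \<le> 1"
  shows "bhattacharyya (Pow (node_pairs n)) (graph_prob n p q C) (graph_prob n p q C')
       = bernoulli_bhattacharyya p q ^ card {e \<in> node_pairs n. edge_prob p q C e \<noteq> edge_prob p q C' e}"
proof -
  let ?a = "bernoulli_bhattacharyya p q"
  have factor: "bernoulli_bhattacharyya x y = (if x \<noteq> y then ?a else 1)"
    if "x \<in> {p, q}" "y \<in> {p, q}" for x y
    using that assms by (auto simp: bernoulli_bhattacharyya_def mult.commute)
  have "bhattacharyya (Pow (node_pairs n)) (graph_prob n p q C) (graph_prob n p q C')
      = (\<Prod>e\<in>node_pairs n. if edge_prob p q C e \<noteq> edge_prob p q C' e then ?a else 1)"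
    unfolding graph_prob_def[abs_def] bhattacharyya_Pow_product[OF finite_node_pairs]
    using edge_prob_cases[of p q] by (intro prod.cong refl factor) auto
  then show ?thesis
    by (simp add: prod_if_eq_power finite_node_pairs)
qed

definition block_clustering :: "nat \<Rightarrow> nat \<Rightarrow> nat set set" where
  "block_clustering r K = (\<lambda>i. {i * K..<Suc i * K}) ` {..<r}"

lemma block_clustering_subset: "\<Union> (block_clustering r K) \<subseteq> {..<r * K}"
proof
  fix x assume "x \<in> \<Union> (block_clustering r K)"
  then obtain i where "i < r" "x < Suc i * K"
    by (auto simp: block_clustering_def)
  moreover from \<open>i < r\<close> have "Suc i * K \<le> r * K"
    by (intro mult_le_mono1) simp
  ultimately show "x \<in> {..<r * K}"
    by simp
qed

lemma valid_block_clustering: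
  assumes "r * K \<le> n" "K \<ge> 1"
  shows "valid_clustering n r K (block_clustering r K)"
proof -
  let ?blk = "\<lambda>i. {i * K..<Suc i * K}"
  have disj: "disjnt (?blk i) (?blk j)" if "i \<noteq> j" for i j
  proof -
    have "Suc i * K \<le> j * K \<or> Suc j * K \<le> i * K"
      using that by (metis mult_le_mono1 not_less_eq_eq nat_neq_iff Suc_leI)
    then show ?thesis
      by (auto simp: disjnt_def)
  qed
  have "inj_on ?blk {..<r}"
    using disj assms(2) by (intro inj_onI) (fastforce simp: disjnt_def)
  moreover have "pairwise disjnt (?blk ` {..<r})"
    using disj by (intro pairwise_imageI)
  ultimately show ?thesis
    using block_clustering_subset[of r K] assms(1)
    by (auto simp: valid_clustering_def block_clustering_def card_image)
qed

lemma valid_clustering_image: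
  assumes "valid_clustering n r K C" "bij_betw \<pi> {..<n} {..<n}"
  shows "valid_clustering n r K ((`) \<pi> ` C)"
proof -
  have inj: "inj_on \<pi> {..<n}" and img: "\<pi> ` {..<n} = {..<n}"
    using assms(2) by (simp_all add: bij_betw_def)
  have sub: "S \<subseteq> {..<n}" and card: "card S = K" if "S \<in> C" for S
    using assms(1) that by (simp_all add: valid_clustering_def)
  have "\<pi> ` S \<subseteq> {..<n} \<and> card (\<pi> ` S) = K" if "S \<in> C" for S
    using sub[OF that] card[OF that] img inj_on_subset[OF inj] by (auto simp: card_image)
  moreover have "pairwise disjnt ((`) \<pi> ` C)"
  proof (rule pairwise_imageI)
    fix S T assume "S \<in> C" "T \<in> C" "S \<noteq> T"
    then have "S \<inter> T = {}"
      using assms(1) by (auto simp: valid_clustering_def pairwise_def disjnt_def)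
    then show "disjnt (\<pi> ` S) (\<pi> ` T)"
      using inj_on_image_Int[OF inj sub sub, of S T] \<open>S \<in> C\<close> \<open>T \<in> C\<close> by (simp add: disjnt_def)
  qed
  moreover have "inj_on ((`) \<pi>) C"
    using inj_on_image_eq_iff[OF inj sub sub] by (intro inj_onI) blast
  ultimately show ?thesis
    using assms(1) by (auto simp: valid_clustering_def card_image)
qed

lemma same_cluster_image:
  assumes "inj \<pi>"
  shows "same_cluster ((`) \<pi> ` C) (\<pi> i) (\<pi> j) \<longleftrightarrow> same_cluster C i j"
  using assms by (auto simp: same_cluster_def inj_image_mem_iff)

lemma transpose_clustering_neq:
  assumes "a \<in> \<Union> C" "b \<notin> \<Union> C"
  shows "(`) (transpose a b) ` C \<noteq> C"
  using assms by (metis UnionE UnionI image_eqI transpose_apply_first)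

lemma card_edge_prob_diff_transpose_le:
  "card {e \<in> node_pairs n. edge_prob p q C e \<noteq> edge_prob p q ((`) (transpose a b) ` C) e} \<le> 4 * n"
proof -
  let ?T = "{a, b}"
  let ?D = "{e \<in> node_pairs n. edge_prob p q C e \<noteq> edge_prob p q ((`) (transpose a b) ` C) e}"
  have "?D \<subseteq> (?T \<times> {..<n}) \<union> ({..<n} \<times> ?T)"
  proof
    fix e assume "e \<in> ?D"
    moreover obtain i j where e: "e = (i, j)"
      by fastforce
    ultimately have ij: "(i, j) \<in> node_pairs n"
      and diff: "edge_prob p q C (i, j) \<noteq> edge_prob p q ((`) (transpose a b) ` C) (i, j)"
      by simp_all
    have "i \<in> ?T \<or> j \<in> ?T"
    proof (rule ccontr)
      assume "\<not> (i \<in> ?T \<or> j \<in> ?T)"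
      then have "transpose a b i = i" "transpose a b j = j"
        by auto
      then have "same_cluster ((`) (transpose a b) ` C) i j \<longleftrightarrow> same_cluster C i j"
        using same_cluster_image[OF inj_transpose, of a b C i j] by simp
      with diff show False
        by (simp add: edge_prob_def)
    qed
    with ij show "e \<in> (?T \<times> {..<n}) \<union> ({..<n} \<times> ?T)"
      by (auto simp: e node_pairs_def)
  qed
  then have "card ?D \<le> card ((?T \<times> {..<n}) \<union> ({..<n} \<times> ?T))"
    by (rule card_mono[rotated]) simp
  also have "\<dots> \<le> card (?T \<times> {..<n}) + card ({..<n} \<times> ?T)"
    by (rule card_Un_le)
  also have "\<dots> \<le> 4 * n"
  proof -
    have "card ?T \<le> 2"
      by (cases "a = b") simp_all
    then have "card ?T * n \<le> 2 * n"
      by (rule mult_le_mono1)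
    then show ?thesis
      unfolding card_cartesian_product card_lessThan mult.commute[of n] by linarith
  qed
  finally show ?thesis .
qed

lemma le_mult_of_power_le_one_minus:
  fixes a x c :: real
  assumes "0 \<le> x" "x < 1" "1 - x \<le> a" "a ^ m \<le> 1 - c"
  shows "c \<le> real m * x"
proof -
  have "1 - real m * x \<le> (1 - x) ^ m"
    using Bernoulli_inequality[of "- x" m] assms(2) by simp
  also have "\<dots> \<le> a ^ m"
    using assms by (intro power_mono) auto
  finally show ?thesis
    using assms(4) by simp
qed

lemma snr_ge_of_bernoulli_bhattacharyya_power_le:
  assumes "0 \<le> q" "q < p" "p \<le> 1" "n > 0"
    and "bernoulli_bhattacharyya p q ^ m \<le> 13/15" "real m \<le> 4 * real n"
  shows "1/6 / sqrt (real n) \<le> (p - q) / sqrt (p * (1 - q))"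
proof -
  define x where "x = (p - q)\<^sup>2 / (p * (1 - q))"
  have x0: "x \<ge> 0"
    using assms by (simp add: x_def)
  have ratio: "(p - q) / sqrt (p * (1 - q)) = sqrt x"
    using assms by (simp add: x_def real_sqrt_divide)
  have "(1/6)\<^sup>2 / real n \<le> x"
  proof (cases "x < 1")
    case True
    have "1 - x \<le> bernoulli_bhattacharyya p q"
      using one_minus_bernoulli_bhattacharyya_le[OF assms(1-3)] by (simp add: x_def)
    then have "2/15 \<le> real m * x"
      by (rule le_mult_of_power_le_one_minus[OF x0 True]) (use assms(5) in simp)
    also have "\<dots> \<le> 4 * real n * x"
      using assms(6) x0 by (rule mult_right_mono)
    finally show ?thesis
      using assms(4) by (simp add: field_simps)
  next
    case False
    have "1 * 1 \<le> x * (36 * real n)"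
      using False assms(4) by (intro mult_mono) auto
    then show ?thesis
      using assms(4) by (simp add: field_simps)
  qed
  then have "sqrt ((1/6)\<^sup>2 / real n) \<le> sqrt x"
    by (rule real_sqrt_le_mono)
  then show ?thesis
    by (simp add: ratio real_sqrt_divide)
qed

lemma bhattacharyya_graph_prob_le_of_success:
  assumes "0 \<le> q" "q \<le> 1" "0 \<le> p" "p \<le> 1" "C \<noteq> C'"
    and "success_prob n p q C f \<ge> 3/4" "success_prob n p q C' f \<ge> 3/4"
  shows "bhattacharyya (Pow (node_pairs n)) (graph_prob n p q C) (graph_prob n p q C') \<le> 13/15"
  using assms unfolding success_prob_def
  by (intro bhattacharyya_le_of_disjoint_events[where A = "{E. E \<subseteq> node_pairs n \<and> f E = C}"
        and B = "{E. E \<subseteq> node_pairs n \<and> f E = C'}"])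
    (auto simp: finite_node_pairs graph_prob_nonneg sum_graph_prob)

lemma snr_ge_of_recovery:
  assumes "0 \<le> q" "q < p" "p \<le> 1" "r \<ge> 1" "K \<ge> 1" "r * K < n"
    and "\<forall>C. valid_clustering n r K C \<longrightarrow> success_prob n p q C f \<ge> 3/4"
  shows "1/6 / sqrt (real n) \<le> (p - q) / sqrt (p * (1 - q))"
proof -
  define C where "C = block_clustering r K"
  define C' where "C' = (`) (transpose 0 (r * K)) ` C"
  let ?D = "{e \<in> node_pairs n. edge_prob p q C e \<noteq> edge_prob p q C' e}"
  have valid: "valid_clustering n r K C"
    using assms(5,6) by (simp add: C_def valid_block_clustering)
  moreover have "valid_clustering n r K C'"
    using assms(6) by (simp add: C'_def valid_clustering_image[OF valid])
  moreover have "C' \<noteq> C"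
    unfolding C'_def
  proof (rule transpose_clustering_neq)
    show "0 \<in> \<Union> C"
      using assms(4,5) by (force simp: C_def block_clustering_def)
    show "r * K \<notin> \<Union> C"
      using block_clustering_subset[of r K] by (auto simp: C_def)
  qed
  ultimately have "bhattacharyya (Pow (node_pairs n)) (graph_prob n p q C) (graph_prob n p q C') \<le> 13/15"
    using assms(1-3,7) by (intro bhattacharyya_graph_prob_le_of_success) auto
  then have "bernoulli_bhattacharyya p q ^ card ?D \<le> 13/15"
    using assms(1-3) by (simp add: bhattacharyya_graph_prob)
  moreover have "card ?D \<le> 4 * n"
    unfolding C'_def by (rule card_edge_prob_diff_transpose_le)
  ultimately show ?thesis
    using assms(1-3,6) by (intro snr_ge_of_bernoulli_bhattacharyya_power_le) auto
qed

theorem theorem2: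
  fixes cK cL cU :: real
  assumes "cK > 0" and "cL > 0" and "cU > 0"
  shows "\<exists>c2 > 0. \<exists>N. \<forall>n \<ge> N. \<forall>n1 n2 K r :: nat. \<forall>p q :: real.
     \<forall>f :: (nat \<times> nat) set \<Rightarrow> nat set set.
       n = n1 + n2 \<and> n1 = r * K \<and> cK * real n \<le> real K \<and>
       cL * real n1 \<le> real n2 \<and> real n2 \<le> cU * real n1 \<and>
       0 \<le> q \<and> q < p \<and> p \<le> 1 \<and>
       (\<forall>C. valid_clustering n r K C \<longrightarrow> success_prob n p q C f \<ge> 3 / 4)
       \<longrightarrow> (p - q) / sqrt (p * (1 - q)) \<ge> c2 / sqrt (real n)"
proof (intro exI[of _ "1/6"] conjI exI[of _ "1::nat"] allI impI; (elim conjE)?)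
  fix n n1 n2 K r :: nat and p q :: real and f :: "(nat \<times> nat) set \<Rightarrow> nat set set"
  assume "1 \<le> n" and n: "n = n1 + n2" and n1: "n1 = r * K" and K: "cK * real n \<le> real K"
    and n2: "cL * real n1 \<le> real n2" "real n2 \<le> cU * real n1"
    and pq: "0 \<le> q" "q < p" "p \<le> 1"
    and recovery: "\<forall>C. valid_clustering n r K C \<longrightarrow> success_prob n p q C f \<ge> 3 / 4"
  have "0 < cK * real n"
    using assms(1) \<open>1 \<le> n\<close> by simp
  with K have "0 < K"
    by (metis of_nat_0_less_iff order_less_le_trans)
  have "0 < n1"
    using n n2(2) \<open>1 \<le> n\<close> by (cases "n1 = 0") auto
  then have "0 < cL * real n1"
    using assms(2) by simp
  with n2(1) have "0 < n2"
    by (metis of_nat_0_less_iff order_less_le_trans)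
  with \<open>0 < K\<close> \<open>0 < n1\<close> show "1/6 / sqrt (real n) \<le> (p - q) / sqrt (p * (1 - q))"
    using n n1 by (intro snr_ge_of_recovery[OF pq _ _ _ recovery]) auto
qed simp

end
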